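(* Let $q\ge1$, $\alpha\in(0,2\wedge q)$ and $R>0$. There is a constant $C=C(R)$ (depending also on $\alpha,q$) such that for all $0<t\le t'$ and $0\le r_1,r_2,r_3\le R$, $$\int\!\!\int p_t(w)p_{t'}(z)|w|^{r_1}|z|^{r_2}e^{r_3(|w|+|z|)}(|w-z|^{-\alpha}+1)\,dw\,dz\le C e^{2r_3^2t'}t^{r_1/2}t'^{r_2/2}(t^{-\alpha/2}+1).$$ Moreover, for every $K>0$ there is $C=C(K,R)$ such that for all $x,y\in[-K,K]^q$, $0<t\le t'$ and $0\le r_1,r_2,r_3\le R$, $$\int\!\!\int p_t(x-w)p_{t'}(y-z)|w|^{r_1}|z|^{r_2}e^{r_3(|w|+|z|)}(|w-z|^{-\alpha}+1)\,dw\,dz\le Ce^{2r_3^2t'}(t^{r_1/2}+1)(t'^{r_2/2}+1)(t^{-\alpha/2}+1).$$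
   Context: $p_t(x)=(2\pi t)^{-q/2}\exp(-|x|^2/(2t))$ is the heat kernel on $\mathbb R^q$; all integrals are over $\mathbb R^q$. *)

theory Defs
  imports "HOL-Analysis.Analysis"
begin

definition heat_kernel :: "real \<Rightarrow> 'a::euclidean_space \<Rightarrow> real" where
  "heat_kernel t x = (2 * pi * t) powr (- real DIM('a) / 2) * exp (- (norm x)\<^sup>2 / (2 * t))"

end

theory Submission
  imports Defs "HOL-Real_Asymp.Real_Asymp"
begin

text \<open>
  Write \<open>p\<^sub>s\<close> for the heat kernel. Integrating \<open>|w - z|^(-\<alpha>)\<close> against \<open>p\<^sub>s(b - z)\<close> gives at most a
  constant times \<open>s^(-\<alpha>/2)\<close>: on the ball of radius \<open>\<surd>s\<close> around \<open>w\<close> bound \<open>p\<^sub>s\<close> by its maximum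
  \<open>(2\<pi>s)^(-q/2)\<close>, the singularity being integrable there since \<open>\<alpha> < q\<close>; off that ball bound the
  singularity by \<open>s^(-\<alpha>/2)\<close>. Integrating out \<open>z\<close> first, with \<open>t \<le> t'\<close>, leaves the factor
  \<open>t^(-\<alpha>/2) + 1\<close>.

  The weights are absorbed into a heat kernel of four times the time: completing the square gives
  \<open>p\<^sub>t(v) exp(r|v|) \<le> 2^q exp(r\<^sup>2 t) p\<^sub>4\<^sub>t(v) exp(-|v|\<^sup>2/(8t))\<close>, and the remaining Gaussian factor
  turns \<open>|v|^r\<close> into a multiple of \<open>t^(r/2)\<close>. For the shifted kernels use \<open>|w| \<le> |x| + |x - w|\<close>
  with \<open>|x|\<close> bounded on the box.
\<close>

subsection \<open>Lebesgue integrability criteria\<close>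

lemma emeasure_lborel_ball_conv_unit_ball:
  fixes c :: "'a::euclidean_space"
  assumes "0 \<le> r"
  shows "emeasure lborel (ball c r) = ennreal (r ^ DIM('a)) * emeasure lborel (ball (0::'a) 1)"
  using emeasure_lebesgue_ball_conv_unit_ball[OF assms, of c]
  by (simp add: emeasure_lborel_ball_finite emeasure_completion)

lemma nn_integral_finite_by_ball_majorant:
  fixes f :: "'a::euclidean_space \<Rightarrow> real" and c r :: "nat \<Rightarrow> real"
  assumes c: "\<And>k. 0 \<le> c k" and r: "\<And>k. 0 \<le> r k"
    and summable: "summable (\<lambda>k. c k * r k ^ DIM('a))"
    and majorant: "\<And>v. 0 < f v \<Longrightarrow> \<exists>k. norm v < r k \<and> f v \<le> c k"
  shows "(\<integral>\<^sup>+v. ennreal (f v) \<partial>lborel) < \<infinity>"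
proof -
  define V where "V = emeasure lborel (ball (0::'a) 1)"
  have pointwise: "ennreal (f v) \<le> (\<Sum>k. ennreal (c k) * indicator (ball 0 (r k)) v)" for v :: 'a
  proof (cases "0 < f v")
    case True
    then obtain k where k: "norm v < r k" "f v \<le> c k" using majorant by blast
    have "ennreal (f v) \<le> (\<Sum>i\<in>{k}. ennreal (c i) * indicator (ball 0 (r i)) v)"
      using k by (simp add: ennreal_leI)
    also have "\<dots> \<le> (\<Sum>k. ennreal (c k) * indicator (ball 0 (r k)) v)"
      by (rule sum_le_suminf) auto
    finally show ?thesis .
  qed (simp add: ennreal_neg)
  have "(\<integral>\<^sup>+v. ennreal (f v) \<partial>lborel) \<le> (\<integral>\<^sup>+v. (\<Sum>k. ennreal (c k) * indicator (ball (0::'a) (r k)) v) \<partial>lborel)"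
    by (intro nn_integral_mono pointwise)
  also have "\<dots> = (\<Sum>k. \<integral>\<^sup>+v. ennreal (c k) * indicator (ball (0::'a) (r k)) v \<partial>lborel)"
    by (intro nn_integral_suminf borel_measurable_times_ennreal borel_measurable_const
        borel_measurable_indicator) auto
  also have "\<dots> = (\<Sum>k. ennreal (c k) * emeasure lborel (ball (0::'a) (r k)))"
    by (intro suminf_cong nn_integral_cmult_indicator) simp
  also have "\<dots> = (\<Sum>k. ennreal (c k * r k ^ DIM('a)) * V)"
  proof (rule suminf_cong)
    fix k
    have "emeasure lborel (ball (0::'a) (r k)) = ennreal (r k ^ DIM('a)) * V"
      unfolding V_def using r by (rule emeasure_lborel_ball_conv_unit_ball)
    then show "ennreal (c k) * emeasure lborel (ball (0::'a) (r k)) = ennreal (c k * r k ^ DIM('a)) * V"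
      by (simp only: ennreal_mult[OF c zero_le_power[OF r]] mult.assoc)
  qed
  also have "\<dots> = ennreal (\<Sum>k. c k * r k ^ DIM('a)) * V"
    using summable c r by (simp add: ennreal_suminf_multc suminf_ennreal2)
  also have "\<dots> < \<infinity>"
    using emeasure_lborel_ball_finite[of "0::'a" 1] by (simp add: V_def ennreal_mult_less_top)
  finally show ?thesis .
qed

lemma nn_integral_powr_ball_finite:
  assumes "0 \<le> \<alpha>" "\<alpha> < real DIM('a::euclidean_space)"
  shows "(\<integral>\<^sup>+v. ennreal (indicator (ball (0::'a) 1) v * norm v powr (- \<alpha>)) \<partial>lborel) < \<infinity>"
proof (rule nn_integral_finite_by_ball_majorant)
  let ?q = "real DIM('a)"
  have "2 powr (\<alpha> * (real k + 1)) * (2 powr (1 - real k)) ^ DIM('a)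
      = 2 powr (\<alpha> + ?q) * (2 powr (\<alpha> - ?q)) ^ k" for k
    by (simp add: powr_realpow[symmetric] powr_powr powr_add[symmetric] algebra_simps)
  moreover have "summable (\<lambda>k. 2 powr (\<alpha> + ?q) * (2 powr (\<alpha> - ?q)) ^ k)"
    using assms by (intro summable_mult summable_geometric) (simp add: powr_less_one)
  ultimately show "summable (\<lambda>k. 2 powr (\<alpha> * (real k + 1)) * (2 powr (1 - real k)) ^ DIM('a))"
    by simp
  fix v :: 'a
  assume "0 < indicator (ball (0::'a) 1) v * norm v powr (- \<alpha>)"
  then have "v \<in> ball 0 1" "v \<noteq> 0"
    by (auto split: split_indicator_asm)
  then have v: "0 < norm v" "norm v < 1"
    by auto
  define L where "L = log 2 (1 / norm v)"
  define k where "k = nat \<lfloor>L\<rfloor>"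
  have L: "0 < L" "norm v = 2 powr (- L)"
    using v by (auto simp: L_def powr_minus_divide)
  have "real k = of_int \<lfloor>L\<rfloor>"
    unfolding k_def using L by simp
  then have k: "real k \<le> L" "L < real k + 1"
    by linarith+
  have "norm v < 2 powr (1 - real k)"
    unfolding L(2) using k by simp
  moreover have "indicator (ball (0::'a) 1) v * norm v powr (- \<alpha>) = 2 powr (\<alpha> * L)"
    using v by (simp add: L(2) powr_powr mult.commute)
  moreover have "2 powr (\<alpha> * L) \<le> 2 powr (\<alpha> * (real k + 1))"
    using k assms by (intro powr_mono mult_left_mono) auto
  ultimately show "\<exists>k. norm v < 2 powr (1 - real k) \<and>
      indicator (ball (0::'a) 1) v * norm v powr (- \<alpha>) \<le> 2 powr (\<alpha> * (real k + 1))"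
    by (intro exI[of _ k]) auto
qed auto

declare open_ball[THEN borel_open, measurable]

lemma nn_integral_lborel_affine:
  fixes f :: "'a::euclidean_space \<Rightarrow> ennreal"
  assumes [measurable]: "f \<in> borel_measurable borel" and "c \<noteq> 0"
  shows "(\<integral>\<^sup>+x. f x \<partial>lborel) = ennreal (\<bar>c\<bar> ^ DIM('a)) * (\<integral>\<^sup>+x. f (t + c *\<^sub>R x) \<partial>lborel)"
  by (subst lborel_affine[OF \<open>c \<noteq> 0\<close>, of t])
     (simp add: nn_integral_density nn_integral_distr nn_integral_cmult)

lemma nn_integral_powr_ball_scale:
  fixes w :: "'a::euclidean_space"
  assumes "0 < \<rho>"
  shows "(\<integral>\<^sup>+z. ennreal (indicator (ball w \<rho>) z * norm (w - z) powr (- \<alpha>)) \<partial>lborel) =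
    ennreal (\<rho> powr (real DIM('a) - \<alpha>)) *
      (\<integral>\<^sup>+v. ennreal (indicator (ball (0::'a) 1) v * norm v powr (- \<alpha>)) \<partial>lborel)"
proof -
  have scaled: "indicator (ball w \<rho>) (w + \<rho> *\<^sub>R v) * norm (w - (w + \<rho> *\<^sub>R v)) powr (- \<alpha>)
      = \<rho> powr (- \<alpha>) * (indicator (ball (0::'a) 1) v * norm v powr (- \<alpha>))" for v :: 'a
    using assms by (simp add: indicator_def dist_norm powr_mult)
  have "(\<integral>\<^sup>+z. ennreal (indicator (ball w \<rho>) z * norm (w - z) powr (- \<alpha>)) \<partial>lborel) =
      ennreal (\<bar>\<rho>\<bar> ^ DIM('a)) * (\<integral>\<^sup>+v. ennreal (indicator (ball w \<rho>) (w + \<rho> *\<^sub>R v) *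
        norm (w - (w + \<rho> *\<^sub>R v)) powr (- \<alpha>)) \<partial>lborel)"
    using assms by (intro nn_integral_lborel_affine) auto
  also have "\<dots> = ennreal (\<rho> ^ DIM('a)) * ennreal (\<rho> powr (- \<alpha>)) *
      (\<integral>\<^sup>+v. ennreal (indicator (ball (0::'a) 1) v * norm v powr (- \<alpha>)) \<partial>lborel)"
    by (simp only: scaled ennreal_mult'[OF powr_ge_zero], subst nn_integral_cmult)
       (measurable, use assms in \<open>simp add: mult.assoc\<close>)
  also have "ennreal (\<rho> ^ DIM('a)) * ennreal (\<rho> powr (- \<alpha>)) = ennreal (\<rho> powr (real DIM('a) - \<alpha>))"
    using assms by (simp add: ennreal_mult'[symmetric] powr_realpow[symmetric] powr_add[symmetric])
  finally show ?thesis .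
qed

subsection \<open>Integrals of the heat kernel\<close>

lemma heat_kernel_nonneg: "0 \<le> heat_kernel t x"
  by (simp add: heat_kernel_def)

lemma borel_measurable_heat_kernel [measurable]:
  "heat_kernel t \<in> borel_measurable (borel :: 'a::euclidean_space measure)"
  unfolding heat_kernel_def by measurable

lemma heat_kernel_minus [simp]: "heat_kernel t (- x) = heat_kernel t x"
  by (simp add: heat_kernel_def)

lemma heat_kernel_le: "0 < t \<Longrightarrow> heat_kernel t x \<le> (2 * pi * t) powr (- real DIM('a) / 2)"
  for x :: "'a::euclidean_space"
  by (simp add: heat_kernel_def)

lemma heat_kernel_rescale:
  assumes "0 < s"
  shows "sqrt s ^ DIM('a) * heat_kernel s (sqrt s *\<^sub>R v) = heat_kernel 1 (v::'a::euclidean_space)"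
proof -
  let ?q = "real DIM('a)"
  have "sqrt s ^ DIM('a) = s powr (?q / 2)"
    using assms by (simp add: powr_realpow[symmetric] powr_half_sqrt[symmetric] powr_powr)
  then have "sqrt s ^ DIM('a) * (2 * pi * s) powr (- ?q / 2) = (2 * pi) powr (- ?q / 2)"
    using assms by (simp add: powr_mult powr_add[symmetric])
  then show ?thesis
    using assms by (simp add: heat_kernel_def power_mult_distrib mult.assoc[symmetric])
qed

text \<open>The total mass of the heat kernel is \<open>1\<close>; only its finiteness and its independence of
  time and centre are needed below.\<close>

lemma nn_integral_heat_kernel_finite:
  "(\<integral>\<^sup>+v. ennreal (heat_kernel 1 (v::'a::euclidean_space)) \<partial>lborel) < \<infinity>"
proof (rule nn_integral_finite_by_ball_majorant)
  have "(\<lambda>k. exp (- (real k)\<^sup>2 / 2) * (real k + 1) ^ DIM('a)) \<in> O(\<lambda>k. (1/2) ^ k)"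
    by real_asymp
  then show "summable (\<lambda>k. exp (- (real k)\<^sup>2 / 2) * (real k + 1) ^ DIM('a))"
    by (rule summable_comparison_test_bigo[rotated]) (simp add: summable_geometric)
  fix v :: 'a
  define k where "k = nat \<lfloor>norm v\<rfloor>"
  have "real k = of_int \<lfloor>norm v\<rfloor>"
    unfolding k_def by simp
  then have k: "real k \<le> norm v" "norm v < real k + 1"
    by linarith+
  have "(2 * pi * 1) powr (- real DIM('a) / 2) \<le> 1"
    using pi_gt3 by (intro less_imp_le powr_less_one) auto
  then have "heat_kernel 1 v \<le> exp (- (norm v)\<^sup>2 / 2)"
    unfolding heat_kernel_def using mult_right_mono by fastforce
  also have "\<dots> \<le> exp (- (real k)\<^sup>2 / 2)"
    using k by (auto intro!: power_mono)
  finally show "\<exists>k. norm v < real k + 1 \<and> heat_kernel 1 v \<le> exp (- (real k)\<^sup>2 / 2)"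
    using k by blast
qed auto

lemma nn_integral_heat_kernel:
  fixes b :: "'a::euclidean_space"
  assumes "0 < s"
  shows "(\<integral>\<^sup>+z. ennreal (heat_kernel s (b - z)) \<partial>lborel) =
    (\<integral>\<^sup>+v. ennreal (heat_kernel 1 (v::'a)) \<partial>lborel)"
proof -
  have "(\<integral>\<^sup>+z. ennreal (heat_kernel s (b - z)) \<partial>lborel) =
      ennreal (sqrt s ^ DIM('a)) * (\<integral>\<^sup>+v. ennreal (heat_kernel s (b - (b + (- sqrt s) *\<^sub>R v))) \<partial>lborel)"
    using assms by (subst nn_integral_lborel_affine[where c = "- sqrt s" and t = b]) auto
  also have "\<dots> = (\<integral>\<^sup>+v. ennreal (sqrt s ^ DIM('a) * heat_kernel s (sqrt s *\<^sub>R (v::'a))) \<partial>lborel)"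
  proof -
    have "b - (b + (- sqrt s) *\<^sub>R v) = sqrt s *\<^sub>R v" for v :: 'a
      by simp
    then show ?thesis
      by (subst nn_integral_cmult[symmetric]) (use assms in \<open>simp_all add: ennreal_mult'\<close>)
  qed
  finally show ?thesis
    using heat_kernel_rescale[OF assms, where 'a = 'a] by simp
qed

lemma heat_kernel_mult_powr_le:
  fixes b w z :: "'a::euclidean_space"
  assumes "0 < s" and "0 \<le> \<alpha>"
  shows "heat_kernel s (b - z) * norm (w - z) powr (- \<alpha>) \<le>
    s powr (- \<alpha> / 2) * heat_kernel s (b - z) +
      (2 * pi * s) powr (- real DIM('a) / 2) * (indicator (ball w (sqrt s)) z * norm (w - z) powr (- \<alpha>))"
proof (cases "z \<in> ball w (sqrt s)")
  case True
  then show ?thesis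
    using assms heat_kernel_le[of s "b - z"] heat_kernel_nonneg[of s "b - z"]
    by (simp add: mult_right_mono add_increasing)
next
  case False
  then have "norm (w - z) powr (- \<alpha>) \<le> sqrt s powr (- \<alpha>)"
    using assms by (intro powr_mono2') (auto simp: dist_norm)
  also have "\<dots> = s powr (- \<alpha> / 2)"
    using assms by (simp add: powr_half_sqrt[symmetric] powr_powr)
  finally show ?thesis
    using False heat_kernel_nonneg[of s "b - z"] by (simp add: mult.commute mult_left_mono)
qed

lemma nn_integral_heat_kernel_powr_le:
  fixes b w :: "'a::euclidean_space"
  assumes "0 < s" and "0 \<le> \<alpha>"
  shows "(\<integral>\<^sup>+z. ennreal (heat_kernel s (b - z) * norm (w - z) powr (- \<alpha>)) \<partial>lborel) \<le>
    ennreal (s powr (- \<alpha> / 2)) *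
      ((\<integral>\<^sup>+v. ennreal (heat_kernel 1 (v::'a)) \<partial>lborel) + ennreal ((2 * pi) powr (- real DIM('a) / 2)) *
        (\<integral>\<^sup>+v. ennreal (indicator (ball (0::'a) 1) v * norm v powr (- \<alpha>)) \<partial>lborel))"
proof -
  let ?q = "real DIM('a)"
  let ?P = "(2 * pi * s) powr (- ?q / 2)"
  let ?I = "\<integral>\<^sup>+v. ennreal (indicator (ball (0::'a) 1) v * norm v powr (- \<alpha>)) \<partial>lborel"
  have "(\<integral>\<^sup>+z. ennreal (heat_kernel s (b - z) * norm (w - z) powr (- \<alpha>)) \<partial>lborel) \<le>
      (\<integral>\<^sup>+z. ennreal (s powr (- \<alpha> / 2)) * ennreal (heat_kernel s (b - z)) +
        ennreal ?P * ennreal (indicator (ball w (sqrt s)) z * norm (w - z) powr (- \<alpha>)) \<partial>lborel)"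
    using ennreal_leI[OF heat_kernel_mult_powr_le[OF assms]]
    by (intro nn_integral_mono) (simp add: ennreal_plus ennreal_mult' heat_kernel_nonneg)
  also have "\<dots> = ennreal (s powr (- \<alpha> / 2)) * (\<integral>\<^sup>+v. ennreal (heat_kernel 1 (v::'a)) \<partial>lborel) +
      ennreal ?P * (ennreal (sqrt s powr (?q - \<alpha>)) * ?I)"
    using assms by (simp add: nn_integral_add nn_integral_cmult nn_integral_heat_kernel nn_integral_powr_ball_scale)
  also have "ennreal ?P * (ennreal (sqrt s powr (?q - \<alpha>)) * ?I) =
      ennreal (s powr (- \<alpha> / 2)) * (ennreal ((2 * pi) powr (- ?q / 2)) * ?I)"
  proof -
    have "?P * sqrt s powr (?q - \<alpha>) = s powr (- \<alpha> / 2) * (2 * pi) powr (- ?q / 2)"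
      using assms by (simp add: powr_mult powr_half_sqrt[symmetric] powr_powr powr_add[symmetric]
          algebra_simps diff_divide_distrib)
    then show ?thesis
      by (simp add: ennreal_mult'[symmetric] mult.assoc[symmetric] del: ennreal_mult)
  qed
  finally show ?thesis
    by (simp add: distrib_left)
qed

lemma nn_integral_heat_kernel_singular_bound:
  fixes \<alpha> :: real
  assumes "0 < \<alpha>" and "\<alpha> < real DIM('a::euclidean_space)"
  obtains K where "K < \<infinity>"
    and "\<And>(b::'a) w s. 0 < s \<Longrightarrow>
      (\<integral>\<^sup>+z. ennreal (heat_kernel s (b - z) * (norm (w - z) powr (- \<alpha>) + 1)) \<partial>lborel)
        \<le> K * ennreal (s powr (- \<alpha> / 2) + 1)"
proof -
  define H where "H = (\<integral>\<^sup>+v. ennreal (heat_kernel 1 (v::'a)) \<partial>lborel)"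
  define S where "S = H + ennreal ((2 * pi) powr (- real DIM('a) / 2)) *
    (\<integral>\<^sup>+v. ennreal (indicator (ball (0::'a) 1) v * norm v powr (- \<alpha>)) \<partial>lborel)"
  show thesis
  proof (rule that[of "S + H"])
    show "S + H < \<infinity>"
      using nn_integral_heat_kernel_finite nn_integral_powr_ball_finite[of \<alpha>] assms
      by (auto simp: H_def S_def ennreal_mult_less_top)
    fix b w :: 'a and s :: real
    assume "0 < s"
    have "ennreal (heat_kernel s (b - z) * (norm (w - z) powr (- \<alpha>) + 1)) =
        ennreal (heat_kernel s (b - z) * norm (w - z) powr (- \<alpha>)) + ennreal (heat_kernel s (b - z))" for z
      by (subst ennreal_plus[symmetric]) (simp_all add: heat_kernel_nonneg distrib_left)
    then have "(\<integral>\<^sup>+z. ennreal (heat_kernel s (b - z) * (norm (w - z) powr (- \<alpha>) + 1)) \<partial>lborel) =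
        (\<integral>\<^sup>+z. ennreal (heat_kernel s (b - z) * norm (w - z) powr (- \<alpha>)) \<partial>lborel) + H"
      using \<open>0 < s\<close> by (simp add: nn_integral_add nn_integral_heat_kernel H_def)
    also have "\<dots> \<le> ennreal (s powr (- \<alpha> / 2)) * S + H * 1"
      using \<open>0 < s\<close> assms unfolding S_def H_def
      by (intro add_mono nn_integral_heat_kernel_powr_le) auto
    also have "\<dots> \<le> (S + H) * (ennreal (s powr (- \<alpha> / 2)) + 1)"
      by (simp add: algebra_simps add_increasing2 add_mono)
    finally show "(\<integral>\<^sup>+z. ennreal (heat_kernel s (b - z) * (norm (w - z) powr (- \<alpha>) + 1)) \<partial>lborel)
        \<le> (S + H) * ennreal (s powr (- \<alpha> / 2) + 1)"
      by (simp add: ennreal_plus)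
  qed
qed

lemma nn_integral_heat_kernel_pair_le:
  fixes \<alpha> :: real
  assumes "0 < \<alpha>" and "\<alpha> < real DIM('a::euclidean_space)"
  obtains C where "0 \<le> C"
    and "\<And>(a::'a) b s s'. 0 < s \<Longrightarrow> s \<le> s' \<Longrightarrow>
      (\<integral>\<^sup>+w. \<integral>\<^sup>+z. ennreal (heat_kernel s (a - w) * heat_kernel s' (b - z) * (norm (w - z) powr (- \<alpha>) + 1))
        \<partial>lborel \<partial>lborel) \<le> ennreal (C * (s powr (- \<alpha> / 2) + 1))"
proof -
  obtain K where "K < \<infinity>" and singular: "\<And>(b::'a) w s. 0 < s \<Longrightarrow>
      (\<integral>\<^sup>+z. ennreal (heat_kernel s (b - z) * (norm (w - z) powr (- \<alpha>) + 1)) \<partial>lborel)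
        \<le> K * ennreal (s powr (- \<alpha> / 2) + 1)"
    using nn_integral_heat_kernel_singular_bound[OF assms] by blast
  define H where "H = (\<integral>\<^sup>+v. ennreal (heat_kernel 1 (v::'a)) \<partial>lborel)"
  have C: "H * K = ennreal (enn2real (H * K))"
    using nn_integral_heat_kernel_finite[where 'a = 'a] \<open>K < \<infinity>\<close>
    by (simp add: H_def ennreal_enn2real_if ennreal_mult_eq_top_iff less_top)
  show thesis
  proof (rule that[of "enn2real (H * K)"])
    fix a b :: 'a and s s' :: real
    assume s: "0 < s" "s \<le> s'"
    have inner: "(\<integral>\<^sup>+z. ennreal (heat_kernel s (a - w) * heat_kernel s' (b - z) *
        (norm (w - z) powr (- \<alpha>) + 1)) \<partial>lborel)
        \<le> ennreal (heat_kernel s (a - w)) * (K * ennreal (s powr (- \<alpha> / 2) + 1))" for w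
    proof -
      have "(\<integral>\<^sup>+z. ennreal (heat_kernel s (a - w) * heat_kernel s' (b - z) *
          (norm (w - z) powr (- \<alpha>) + 1)) \<partial>lborel) = ennreal (heat_kernel s (a - w)) *
          (\<integral>\<^sup>+z. ennreal (heat_kernel s' (b - z) * (norm (w - z) powr (- \<alpha>) + 1)) \<partial>lborel)"
        by (subst nn_integral_cmult[symmetric]) (simp_all add: ennreal_mult' heat_kernel_nonneg mult.assoc)
      also have "\<dots> \<le> ennreal (heat_kernel s (a - w)) * (K * ennreal (s' powr (- \<alpha> / 2) + 1))"
        using s by (intro mult_left_mono singular) auto
      also have "\<dots> \<le> ennreal (heat_kernel s (a - w)) * (K * ennreal (s powr (- \<alpha> / 2) + 1))"
        using s assms by (intro mult_left_mono ennreal_leI add_right_mono powr_mono2') auto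
      finally show ?thesis .
    qed
    have "(\<integral>\<^sup>+w. \<integral>\<^sup>+z. ennreal (heat_kernel s (a - w) * heat_kernel s' (b - z) *
        (norm (w - z) powr (- \<alpha>) + 1)) \<partial>lborel \<partial>lborel) \<le>
        (\<integral>\<^sup>+w. ennreal (heat_kernel s (a - w)) * (K * ennreal (s powr (- \<alpha> / 2) + 1)) \<partial>lborel)"
      by (intro nn_integral_mono inner)
    also have "\<dots> = H * K * ennreal (s powr (- \<alpha> / 2) + 1)"
      using s by (simp add: nn_integral_multc nn_integral_heat_kernel H_def mult.assoc)
    also have "\<dots> = ennreal (enn2real (H * K) * (s powr (- \<alpha> / 2) + 1))"
      by (subst C) (simp add: ennreal_mult)
    finally show "(\<integral>\<^sup>+w. \<integral>\<^sup>+z. ennreal (heat_kernel s (a - w) * heat_kernel s' (b - z) *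
        (norm (w - z) powr (- \<alpha>) + 1)) \<partial>lborel \<partial>lborel) \<le>
        ennreal (enn2real (H * K) * (s powr (- \<alpha> / 2) + 1))" .
  qed simp
qed

subsection \<open>Absorbing polynomial and exponential weights\<close>

lemma power_le_fact_mult_exp:
  fixes x :: real
  assumes "0 \<le> x"
  shows "x ^ n \<le> fact n * exp x"
proof -
  have "x ^ n /\<^sub>R fact n \<le> (\<Sum>k. x ^ k /\<^sub>R fact k)"
    using sum_le_suminf[OF summable_exp_generic[of x], of "{n}"] assms by auto
  then have "x ^ n / fact n \<le> exp x"
    by (simp add: exp_def divide_inverse_commute)
  then show ?thesis
    by (simp add: field_simps)
qed

lemma powr_mult_exp_neg_le:
  fixes u r :: real
  assumes "0 \<le> u" "0 \<le> r" "r \<le> real N"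
  shows "u powr r * exp (- u\<^sup>2 / 8) \<le> 1 + 8 ^ N * fact N"
proof (cases "u \<le> 1")
  case True
  then have "u powr r \<le> 1"
    using assms by (cases "u = 0") (auto intro: powr_le1)
  then have "u powr r * exp (- u\<^sup>2 / 8) \<le> 1"
    by (simp add: mult_le_one)
  then show ?thesis
    by (rule add_increasing2[rotated]) simp
next
  case False
  have "u powr r \<le> u ^ (2 * N)"
    using False assms by (simp add: powr_realpow[symmetric] powr_mono)
  also have "\<dots> = 8 ^ N * (u\<^sup>2 / 8) ^ N"
    by (simp add: power_mult power_divide)
  also have "\<dots> \<le> 8 ^ N * (fact N * exp (u\<^sup>2 / 8))"
    by (intro mult_left_mono power_le_fact_mult_exp) auto
  finally have "u powr r * exp (- u\<^sup>2 / 8) \<le> 8 ^ N * fact N * (exp (u\<^sup>2 / 8) * exp (- u\<^sup>2 / 8))"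
    by (simp add: mult_right_mono mult.assoc)
  then show ?thesis
    by (simp add: exp_minus)
qed

lemma powr_mult_exp_neg_scaled_le:
  fixes n r t :: real
  assumes "0 < t" "0 \<le> n" "0 \<le> r" "r \<le> real N"
  shows "n powr r * exp (- n\<^sup>2 / (8 * t)) \<le> (1 + 8 ^ N * fact N) * t powr (r / 2)"
proof -
  define u where "u = n / sqrt t"
  have u: "n = sqrt t * u" "0 \<le> u"
    using assms by (simp_all add: u_def)
  then have "n powr r = t powr (r / 2) * u powr r"
    using assms by (simp add: powr_mult powr_half_sqrt[symmetric] powr_powr)
  moreover have "n\<^sup>2 / (8 * t) = u\<^sup>2 / 8"
    using assms u by (simp add: power_mult_distrib)
  ultimately have "n powr r * exp (- n\<^sup>2 / (8 * t)) = t powr (r / 2) * (u powr r * exp (- u\<^sup>2 / 8))"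
    by simp
  also have "\<dots> \<le> t powr (r / 2) * (1 + 8 ^ N * fact N)"
    using \<open>0 \<le> u\<close> assms by (intro mult_left_mono powr_mult_exp_neg_le) auto
  finally show ?thesis
    by (simp add: mult.commute)
qed

lemma heat_kernel_eq_scale4:
  assumes "0 < t"
  shows "heat_kernel t (v::'a::euclidean_space) =
    2 ^ DIM('a) * heat_kernel (4 * t) v * exp (- 3 * (norm v)\<^sup>2 / (8 * t))"
proof -
  let ?q = "real DIM('a)"
  have "(4::real) powr (- ?q / 2) = 1 / 2 ^ DIM('a)"
    by (simp add: powr_powr[of 2 2, simplified, symmetric] powr_minus_divide powr_realpow)
  moreover have "(2 * pi * (4 * t)) powr (- ?q / 2) = 4 powr (- ?q / 2) * (2 * pi * t) powr (- ?q / 2)"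
    using assms by (simp add: powr_mult[symmetric] mult_ac)
  ultimately have "(2 * pi * (4 * t)) powr (- ?q / 2) = (2 * pi * t) powr (- ?q / 2) / 2 ^ DIM('a)"
    by simp
  moreover have "exp (- (norm v)\<^sup>2 / (2 * t)) = exp (- (norm v)\<^sup>2 / (8 * t)) * exp (- 3 * (norm v)\<^sup>2 / (8 * t))"
    using assms by (simp add: exp_add[symmetric] field_simps)
  ultimately show ?thesis
    by (simp add: heat_kernel_def)
qed

lemma heat_kernel_mult_exp_le:
  assumes "0 < t"
  shows "heat_kernel t (v::'a::euclidean_space) * exp (r * norm v) \<le>
    2 ^ DIM('a) * exp (r\<^sup>2 * t) * heat_kernel (4 * t) v * exp (- (norm v)\<^sup>2 / (8 * t))"
proof -
  \<comment> \<open>completing the square: \<open>0 \<le> (norm v - 2 r t)\<^sup>2 / (4 t)\<close>\<close>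
  have "(norm v - 2 * r * t)\<^sup>2 / (4 * t) = (norm v)\<^sup>2 / (4 * t) - r * norm v + r\<^sup>2 * t"
    using assms by (simp add: field_simps power2_eq_square)
  moreover have "0 \<le> (norm v - 2 * r * t)\<^sup>2 / (4 * t)"
    using assms by simp
  moreover have "- 3 * (norm v)\<^sup>2 / (8 * t) + (norm v)\<^sup>2 / (4 * t) = - (norm v)\<^sup>2 / (8 * t)"
    using assms by (simp add: field_simps)
  ultimately have "- 3 * (norm v)\<^sup>2 / (8 * t) + r * norm v \<le> r\<^sup>2 * t + - (norm v)\<^sup>2 / (8 * t)"
    by linarith
  then have "exp (- 3 * (norm v)\<^sup>2 / (8 * t)) * exp (r * norm v) \<le> exp (r\<^sup>2 * t) * exp (- (norm v)\<^sup>2 / (8 * t))"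
    by (simp add: exp_add[symmetric])
  then have "2 ^ DIM('a) * heat_kernel (4 * t) v * (exp (- 3 * (norm v)\<^sup>2 / (8 * t)) * exp (r * norm v)) \<le>
      2 ^ DIM('a) * heat_kernel (4 * t) v * (exp (r\<^sup>2 * t) * exp (- (norm v)\<^sup>2 / (8 * t)))"
    by (rule mult_left_mono) (simp add: heat_kernel_nonneg)
  then show ?thesis
    by (subst heat_kernel_eq_scale4[OF assms]) (simp add: mult_ac)
qed

lemma heat_kernel_moment_le:
  assumes "0 < t" "0 \<le> r" "r \<le> real N"
  shows "heat_kernel t (v::'a::euclidean_space) * exp (r3 * norm v) * norm v powr r \<le>
    2 ^ DIM('a) * (1 + 8 ^ N * fact N) * exp (r3\<^sup>2 * t) * t powr (r / 2) * heat_kernel (4 * t) v"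
proof -
  define A where "A = 2 ^ DIM('a) * exp (r3\<^sup>2 * t) * heat_kernel (4 * t) v"
  have "A \<ge> 0"
    by (simp add: A_def heat_kernel_nonneg)
  have "heat_kernel t v * exp (r3 * norm v) * norm v powr r \<le> A * (norm v powr r * exp (- (norm v)\<^sup>2 / (8 * t)))"
    using mult_right_mono[OF heat_kernel_mult_exp_le[OF assms(1), of v r3], of "norm v powr r"]
    by (simp add: A_def mult_ac)
  also have "\<dots> \<le> A * ((1 + 8 ^ N * fact N) * t powr (r / 2))"
    using \<open>A \<ge> 0\<close> assms by (intro mult_left_mono powr_mult_exp_neg_scaled_le) auto
  finally show ?thesis
    by (simp add: A_def mult_ac)
qed

lemma powr_le_shift:
  fixes m n D r :: real
  assumes "0 \<le> m" "0 \<le> n" "0 \<le> D" "m \<le> D + n" "0 \<le> r" "r \<le> real N"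
  shows "m powr r \<le> (2 * D + 1) ^ N + 2 ^ N * n powr r"
proof (cases "m = 0")
  case False
  then have "m powr r \<le> (D + n) powr r"
    using assms by (intro powr_mono2) auto
  also have "\<dots> \<le> (2 * D + 1) ^ N + 2 ^ N * n powr r"
  proof (cases "n \<le> D")
    case True
    then have "(D + n) powr r \<le> (2 * D + 1) powr r"
      using assms False by (intro powr_mono2) auto
    also have "\<dots> \<le> (2 * D + 1) powr real N"
      using assms True by (intro powr_mono) auto
    finally show ?thesis
      using assms True by (simp add: powr_realpow add_increasing2)
  next
    case False
    then have "(D + n) powr r \<le> (2 * n) powr r"
      using assms by (intro powr_mono2) auto
    also have "\<dots> \<le> 2 ^ N * n powr r"
      using assms by (simp add: powr_mult powr_realpow[symmetric] mult_right_mono powr_mono)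
    finally show ?thesis
      using assms False by (simp add: add_increasing)
  qed
  finally show ?thesis .
qed (use assms in \<open>simp add: add_nonneg_nonneg\<close>)

lemma heat_kernel_shifted_moment_le:
  fixes x w :: "'a::euclidean_space"
  assumes "0 < t" "0 \<le> r" "r \<le> real N" "0 \<le> r3" "r3 \<le> real N" "norm x \<le> D"
  shows "heat_kernel t (x - w) * exp (r3 * norm w) * norm w powr r \<le>
    exp (N * D) * 2 ^ DIM('a) * ((2 * D + 1) ^ N + 2 ^ N * (1 + 8 ^ N * fact N))
      * exp (r3\<^sup>2 * t) * (t powr (r / 2) + 1) * heat_kernel (4 * t) (x - w)"
proof -
  define v where "v = x - w"
  define h where "h = heat_kernel t v"
  define E where "E = 2 ^ DIM('a) * exp (r3\<^sup>2 * t) * heat_kernel (4 * t) v"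
  define B where "B = (1 + 8 ^ N * fact N :: real)"
  have "0 \<le> D"
    using assms(6) norm_ge_zero[of x] by linarith
  then have nonneg: "0 \<le> h" "0 \<le> E" "0 \<le> D" "0 \<le> B"
    by (auto simp: h_def E_def B_def heat_kernel_nonneg)
  have w: "norm w \<le> D + norm v"
    using norm_triangle_ineq4[of x v] assms by (simp add: v_def)
  have exp_w: "exp (r3 * norm w) \<le> exp (N * D) * exp (r3 * norm v)"
    using assms w nonneg mult_left_mono[OF w, of r3] mult_right_mono[of r3 "real N" D]
    by (simp add: exp_add[symmetric] distrib_left)
  have powr_w: "norm w powr r \<le> (2 * D + 1) ^ N + 2 ^ N * norm v powr r"
    using assms w nonneg by (intro powr_le_shift) auto
  have "h * exp (r3 * norm w) * norm w powr r \<le>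
      h * (exp (N * D) * exp (r3 * norm v)) * ((2 * D + 1) ^ N + 2 ^ N * norm v powr r)"
    using nonneg by (intro mult_mono mult_left_mono exp_w powr_w) auto
  also have "\<dots> =
      exp (N * D) * ((2 * D + 1) ^ N * (h * exp (r3 * norm v)) + 2 ^ N * (h * exp (r3 * norm v) * norm v powr r))"
    by (simp add: algebra_simps)
  also have "\<dots> \<le> exp (N * D) * ((2 * D + 1) ^ N * E + 2 ^ N * (B * t powr (r / 2) * E))"
  proof -
    have "E * exp (- (norm v)\<^sup>2 / (8 * t)) \<le> E"
      using nonneg assms(1) by (intro mult_left_le) auto
    then have "h * exp (r3 * norm v) \<le> E"
      using heat_kernel_mult_exp_le[OF assms(1), of v r3] unfolding h_def E_def by linarith
    moreover have "h * exp (r3 * norm v) * norm v powr r \<le> B * t powr (r / 2) * E"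
      using heat_kernel_moment_le[OF assms(1-3), of v r3] by (simp add: h_def E_def B_def mult_ac)
    ultimately show ?thesis
      using nonneg by (intro mult_left_mono add_mono) auto
  qed
  also have "\<dots> \<le> exp (N * D) * ((2 * D + 1) ^ N + 2 ^ N * B) * (t powr (r / 2) + 1) * E"
    using nonneg by (simp add: algebra_simps mult_left_mono add_increasing2 add_mono)
  finally show ?thesis
    by (simp add: h_def E_def B_def v_def mult_ac)
qed

lemma norm_le_of_Basis_bound:
  fixes x :: "'a::euclidean_space"
  assumes "\<forall>i\<in>Basis. \<bar>x \<bullet> i\<bar> \<le> K"
  shows "norm x \<le> K * real DIM('a)"
proof -
  have "norm x \<le> (\<Sum>i\<in>Basis. \<bar>x \<bullet> i\<bar>)"
    by (rule norm_le_l1)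
  also have "\<dots> \<le> (\<Sum>i\<in>(Basis::'a set). K)"
    using assms by (intro sum_mono) auto
  finally show ?thesis
    by (simp add: mult.commute)
qed

subsection \<open>The weighted double integrals\<close>

lemma nn_integral_heat_kernel_pair_dominated:
  fixes f g :: "'a::euclidean_space \<Rightarrow> real"
  assumes f: "\<And>w. 0 \<le> f w" "\<And>w. f w \<le> A * heat_kernel s (a - w)"
    and g: "\<And>z. 0 \<le> g z" "\<And>z. g z \<le> B * heat_kernel s' (b - z)"
    and "0 \<le> A" "0 \<le> B"
  shows "(\<integral>\<^sup>+w. \<integral>\<^sup>+z. ennreal (f w * g z * (norm (w - z) powr (- \<alpha>) + 1)) \<partial>lborel \<partial>lborel) \<le>
    ennreal (A * B) * (\<integral>\<^sup>+w. \<integral>\<^sup>+z. ennreal (heat_kernel s (a - w) * heat_kernel s' (b - z) *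
      (norm (w - z) powr (- \<alpha>) + 1)) \<partial>lborel \<partial>lborel)"
proof -
  have "f w * g z * (norm (w - z) powr (- \<alpha>) + 1) \<le>
      (A * B) * (heat_kernel s (a - w) * heat_kernel s' (b - z) * (norm (w - z) powr (- \<alpha>) + 1))" for w z
  proof -
    have "f w * g z \<le> (A * heat_kernel s (a - w)) * (B * heat_kernel s' (b - z))"
      using \<open>0 \<le> A\<close> heat_kernel_nonneg[of s "a - w"] by (intro mult_mono f g) auto
    then have "f w * g z * (norm (w - z) powr (- \<alpha>) + 1) \<le>
        (A * heat_kernel s (a - w)) * (B * heat_kernel s' (b - z)) * (norm (w - z) powr (- \<alpha>) + 1)"
      by (rule mult_right_mono) (simp add: add_nonneg_nonneg)
    then show ?thesis
      by (simp add: mult_ac)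
  qed
  then have "(\<integral>\<^sup>+w. \<integral>\<^sup>+z. ennreal (f w * g z * (norm (w - z) powr (- \<alpha>) + 1)) \<partial>lborel \<partial>lborel) \<le>
      (\<integral>\<^sup>+w. \<integral>\<^sup>+z. ennreal (A * B) * ennreal (heat_kernel s (a - w) * heat_kernel s' (b - z) *
        (norm (w - z) powr (- \<alpha>) + 1)) \<partial>lborel \<partial>lborel)"
    using \<open>0 \<le> A\<close> \<open>0 \<le> B\<close> by (intro nn_integral_mono) (simp add: ennreal_mult'[symmetric] ennreal_leI)
  also have "\<dots> = ennreal (A * B) * (\<integral>\<^sup>+w. \<integral>\<^sup>+z. ennreal (heat_kernel s (a - w) * heat_kernel s' (b - z) *
      (norm (w - z) powr (- \<alpha>) + 1)) \<partial>lborel \<partial>lborel)"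
    by (simp add: nn_integral_cmult)
  finally show ?thesis .
qed

lemma nn_integral_heat_kernel_pair_weighted_le:
  fixes f g :: "'a::euclidean_space \<Rightarrow> real"
  assumes pair: "\<And>(a::'a) b s s'. 0 < s \<Longrightarrow> s \<le> s' \<Longrightarrow>
      (\<integral>\<^sup>+w. \<integral>\<^sup>+z. ennreal (heat_kernel s (a - w) * heat_kernel s' (b - z) * (norm (w - z) powr (- \<alpha>) + 1))
        \<partial>lborel \<partial>lborel) \<le> ennreal (C * (s powr (- \<alpha> / 2) + 1))"
    and "0 \<le> C" "0 < \<alpha>" "0 < t" "t \<le> t'" "0 \<le> M" "0 \<le> \<phi>" "0 \<le> \<psi>"
    and f: "\<And>w. 0 \<le> f w" "\<And>w. f w \<le> M * exp (r\<^sup>2 * t) * \<phi> * heat_kernel (4 * t) (x - w)"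
    and g: "\<And>z. 0 \<le> g z" "\<And>z. g z \<le> M * exp (r\<^sup>2 * t') * \<psi> * heat_kernel (4 * t') (y - z)"
  shows "(\<integral>\<^sup>+w. \<integral>\<^sup>+z. ennreal (f w * g z * (norm (w - z) powr (- \<alpha>) + 1)) \<partial>lborel \<partial>lborel) \<le>
    ennreal (M * M * C * exp (2 * r\<^sup>2 * t') * \<phi> * \<psi> * (t powr (- \<alpha> / 2) + 1))"
proof -
  let ?A = "M * exp (r\<^sup>2 * t) * \<phi>" and ?B = "M * exp (r\<^sup>2 * t') * \<psi>"
  have "(\<integral>\<^sup>+w. \<integral>\<^sup>+z. ennreal (f w * g z * (norm (w - z) powr (- \<alpha>) + 1)) \<partial>lborel \<partial>lborel) \<le>
      ennreal (?A * ?B) * ennreal (C * ((4 * t) powr (- \<alpha> / 2) + 1))"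
    using assms by (intro order_trans[OF nn_integral_heat_kernel_pair_dominated[OF f g] mult_left_mono] pair) auto
  also have "\<dots> \<le> ennreal (M * M * C * exp (2 * r\<^sup>2 * t') * \<phi> * \<psi> * (t powr (- \<alpha> / 2) + 1))"
  proof -
    have "exp (r\<^sup>2 * t) * exp (r\<^sup>2 * t') \<le> exp (2 * r\<^sup>2 * t')"
      using mult_left_mono[OF \<open>t \<le> t'\<close>, of "r\<^sup>2"] by (simp add: exp_add[symmetric] algebra_simps)
    moreover have "(4 * t) powr (- \<alpha> / 2) \<le> t powr (- \<alpha> / 2)"
      using assms by (intro powr_mono2') auto
    ultimately have "exp (r\<^sup>2 * t) * exp (r\<^sup>2 * t') * ((4 * t) powr (- \<alpha> / 2) + 1) \<le>
        exp (2 * r\<^sup>2 * t') * (t powr (- \<alpha> / 2) + 1)"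
      by (intro mult_mono) auto
    then have "?A * ?B * (C * ((4 * t) powr (- \<alpha> / 2) + 1)) \<le>
        M * M * C * \<phi> * \<psi> * (exp (2 * r\<^sup>2 * t') * (t powr (- \<alpha> / 2) + 1))"
      using assms by (simp add: mult_left_mono mult_ac)
    then show ?thesis
      using assms by (simp add: ennreal_mult'[symmetric] ennreal_leI mult_ac)
  qed
  finally show ?thesis .
qed

lemma heat_kernel_moment_pair_bound:
  fixes \<alpha> R :: real
  assumes "0 < \<alpha>" and "\<alpha> < real DIM('a::euclidean_space)"
  shows "\<exists>C. \<forall>t t' r1 r2 r3. 0 < t \<longrightarrow> t \<le> t' \<longrightarrow>
      0 \<le> r1 \<longrightarrow> r1 \<le> R \<longrightarrow> 0 \<le> r2 \<longrightarrow> r2 \<le> R \<longrightarrow> 0 \<le> r3 \<longrightarrow> r3 \<le> R \<longrightarrow>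
      (\<integral>\<^sup>+ w. \<integral>\<^sup>+ z. ennreal (heat_kernel t (w::'a) * heat_kernel t' (z::'a)
           * norm w powr r1 * norm z powr r2 * exp (r3 * (norm w + norm z))
           * (norm (w - z) powr (- \<alpha>) + 1)) \<partial>lborel \<partial>lborel)
      \<le> ennreal (C * exp (2 * r3\<^sup>2 * t') * t powr (r1 / 2) * t' powr (r2 / 2) * (t powr (- \<alpha> / 2) + 1))"
proof -
  obtain C where "0 \<le> C" and pair: "\<And>(a::'a) b s s'. 0 < s \<Longrightarrow> s \<le> s' \<Longrightarrow>
      (\<integral>\<^sup>+w. \<integral>\<^sup>+z. ennreal (heat_kernel s (a - w) * heat_kernel s' (b - z) * (norm (w - z) powr (- \<alpha>) + 1))
        \<partial>lborel \<partial>lborel) \<le> ennreal (C * (s powr (- \<alpha> / 2) + 1))"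
    using nn_integral_heat_kernel_pair_le[OF assms] by blast
  define N where "N = nat \<lceil>R\<rceil>"
  define M where "M = 2 ^ DIM('a) * (1 + 8 ^ N * fact N :: real)"
  have "R \<le> real N"
    unfolding N_def by linarith
  show ?thesis
  proof (intro exI[of _ "M * M * C"] allI impI)
    fix t t' r1 r2 r3 :: real
    assume t: "0 < t" "t \<le> t'" and r: "0 \<le> r1" "r1 \<le> R" "0 \<le> r2" "r2 \<le> R" "0 \<le> r3"
    define f where "f w = heat_kernel t w * exp (r3 * norm w) * norm w powr r1" for w :: 'a
    define g where "g z = heat_kernel t' z * exp (r3 * norm z) * norm z powr r2" for z :: 'a
    have f: "f w \<le> M * exp (r3\<^sup>2 * t) * t powr (r1 / 2) * heat_kernel (4 * t) w" for w
      using heat_kernel_moment_le[of t r1 N w r3] t r \<open>R \<le> real N\<close> by (simp add: f_def M_def)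
    have g: "g z \<le> M * exp (r3\<^sup>2 * t') * t' powr (r2 / 2) * heat_kernel (4 * t') z" for z
      using heat_kernel_moment_le[of t' r2 N z r3] t r \<open>R \<le> real N\<close> by (simp add: g_def M_def)
    have "(\<integral>\<^sup>+w. \<integral>\<^sup>+z. ennreal (f w * g z * (norm (w - z) powr (- \<alpha>) + 1)) \<partial>lborel \<partial>lborel) \<le>
        ennreal (M * M * C * exp (2 * r3\<^sup>2 * t') * t powr (r1 / 2) * t' powr (r2 / 2) * (t powr (- \<alpha> / 2) + 1))"
    proof (rule nn_integral_heat_kernel_pair_weighted_le[where x = 0 and y = 0, OF pair \<open>0 \<le> C\<close> assms(1) t])
      show "0 \<le> M" "0 \<le> t powr (r1 / 2)" "0 \<le> t' powr (r2 / 2)"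
        by (simp_all add: M_def)
      show "0 \<le> f w" "0 \<le> g z" for w z
        by (simp_all add: f_def g_def heat_kernel_nonneg)
    qed (simp_all add: f g)
    then show "(\<integral>\<^sup>+ w. \<integral>\<^sup>+ z. ennreal (heat_kernel t (w::'a) * heat_kernel t' (z::'a)
           * norm w powr r1 * norm z powr r2 * exp (r3 * (norm w + norm z))
           * (norm (w - z) powr (- \<alpha>) + 1)) \<partial>lborel \<partial>lborel)
      \<le> ennreal (M * M * C * exp (2 * r3\<^sup>2 * t') * t powr (r1 / 2) * t' powr (r2 / 2) * (t powr (- \<alpha> / 2) + 1))"
      by (simp add: f_def g_def distrib_left exp_add ac_simps)
  qed
qed

lemma heat_kernel_shifted_moment_pair_bound:
  fixes \<alpha> R K :: real
  assumes "0 < \<alpha>" and "\<alpha> < real DIM('a::euclidean_space)"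
  shows "\<exists>C. \<forall>(x::'a) (y::'a) t t' r1 r2 r3.
      (\<forall>i\<in>Basis. \<bar>x \<bullet> i\<bar> \<le> K) \<longrightarrow> (\<forall>i\<in>Basis. \<bar>y \<bullet> i\<bar> \<le> K) \<longrightarrow>
      0 < t \<longrightarrow> t \<le> t' \<longrightarrow>
      0 \<le> r1 \<longrightarrow> r1 \<le> R \<longrightarrow> 0 \<le> r2 \<longrightarrow> r2 \<le> R \<longrightarrow> 0 \<le> r3 \<longrightarrow> r3 \<le> R \<longrightarrow>
      (\<integral>\<^sup>+ w. \<integral>\<^sup>+ z. ennreal (heat_kernel t (x - w) * heat_kernel t' (y - z)
           * norm w powr r1 * norm z powr r2 * exp (r3 * (norm w + norm z))
           * (norm (w - z) powr (- \<alpha>) + 1)) \<partial>lborel \<partial>lborel)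
      \<le> ennreal (C * exp (2 * r3\<^sup>2 * t') * (t powr (r1 / 2) + 1) * (t' powr (r2 / 2) + 1)
                  * (t powr (- \<alpha> / 2) + 1))"
proof -
  obtain C where "0 \<le> C" and pair: "\<And>(a::'a) b s s'. 0 < s \<Longrightarrow> s \<le> s' \<Longrightarrow>
      (\<integral>\<^sup>+w. \<integral>\<^sup>+z. ennreal (heat_kernel s (a - w) * heat_kernel s' (b - z) * (norm (w - z) powr (- \<alpha>) + 1))
        \<partial>lborel \<partial>lborel) \<le> ennreal (C * (s powr (- \<alpha> / 2) + 1))"
    using nn_integral_heat_kernel_pair_le[OF assms] by blast
  define N where "N = nat \<lceil>R\<rceil>"
  define D where "D = K * real DIM('a)"
  define M where "M = exp (N * D) * 2 ^ DIM('a) * ((2 * D + 1) ^ N + 2 ^ N * (1 + 8 ^ N * fact N))"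
  have "R \<le> real N"
    unfolding N_def by linarith
  show ?thesis
  proof (intro exI[of _ "M * M * C"] allI impI)
    fix x y :: 'a and t t' r1 r2 r3 :: real
    assume "\<forall>i\<in>Basis. \<bar>x \<bullet> i\<bar> \<le> K" "\<forall>i\<in>Basis. \<bar>y \<bullet> i\<bar> \<le> K"
      and t: "0 < t" "t \<le> t'" and r: "0 \<le> r1" "r1 \<le> R" "0 \<le> r2" "r2 \<le> R" "0 \<le> r3" "r3 \<le> R"
    then have xy: "norm x \<le> D" "norm y \<le> D"
      by (simp_all add: D_def norm_le_of_Basis_bound)
    then have "0 \<le> D"
      using norm_ge_zero[of x] by linarith
    define f where "f w = heat_kernel t (x - w) * exp (r3 * norm w) * norm w powr r1" for w :: 'a
    define g where "g z = heat_kernel t' (y - z) * exp (r3 * norm z) * norm z powr r2" for z :: 'a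
    have f: "f w \<le> M * exp (r3\<^sup>2 * t) * (t powr (r1 / 2) + 1) * heat_kernel (4 * t) (x - w)" for w
      using heat_kernel_shifted_moment_le[of t r1 N r3 x D w] t r xy \<open>R \<le> real N\<close>
      by (simp add: f_def M_def)
    have g: "g z \<le> M * exp (r3\<^sup>2 * t') * (t' powr (r2 / 2) + 1) * heat_kernel (4 * t') (y - z)" for z
      using heat_kernel_shifted_moment_le[of t' r2 N r3 y D z] t r xy \<open>R \<le> real N\<close>
      by (simp add: g_def M_def)
    have "(\<integral>\<^sup>+w. \<integral>\<^sup>+z. ennreal (f w * g z * (norm (w - z) powr (- \<alpha>) + 1)) \<partial>lborel \<partial>lborel) \<le>
        ennreal (M * M * C * exp (2 * r3\<^sup>2 * t') * (t powr (r1 / 2) + 1) * (t' powr (r2 / 2) + 1)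
          * (t powr (- \<alpha> / 2) + 1))"
    proof (rule nn_integral_heat_kernel_pair_weighted_le[OF pair \<open>0 \<le> C\<close> assms(1) t _ _ _ _ f _ g])
      show "0 \<le> M"
        using \<open>0 \<le> D\<close> by (simp add: M_def)
      show "0 \<le> f w" "0 \<le> g z" for w z
        by (simp_all add: f_def g_def heat_kernel_nonneg)
    qed simp_all
    then show "(\<integral>\<^sup>+ w. \<integral>\<^sup>+ z. ennreal (heat_kernel t (x - w) * heat_kernel t' (y - z)
           * norm w powr r1 * norm z powr r2 * exp (r3 * (norm w + norm z))
           * (norm (w - z) powr (- \<alpha>) + 1)) \<partial>lborel \<partial>lborel)
      \<le> ennreal (M * M * C * exp (2 * r3\<^sup>2 * t') * (t powr (r1 / 2) + 1) * (t' powr (r2 / 2) + 1)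
                  * (t powr (- \<alpha> / 2) + 1))"
      by (simp add: f_def g_def distrib_left exp_add ac_simps)
  qed
qed

theorem lemma4p4:
  fixes \<alpha> R :: real
  assumes "0 < \<alpha>" and "\<alpha> < min 2 (real DIM('a::euclidean_space))" and "0 < R"
  shows "(\<exists>C. \<forall>t t' r1 r2 r3. 0 < t \<longrightarrow> t \<le> t' \<longrightarrow>
            0 \<le> r1 \<longrightarrow> r1 \<le> R \<longrightarrow> 0 \<le> r2 \<longrightarrow> r2 \<le> R \<longrightarrow> 0 \<le> r3 \<longrightarrow> r3 \<le> R \<longrightarrow>
            (\<integral>\<^sup>+ w. \<integral>\<^sup>+ z. ennreal (heat_kernel t (w::'a) * heat_kernel t' (z::'a)
                 * norm w powr r1 * norm z powr r2 * exp (r3 * (norm w + norm z))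
                 * (norm (w - z) powr (- \<alpha>) + 1)) \<partial>lborel \<partial>lborel)
            \<le> ennreal (C * exp (2 * r3\<^sup>2 * t') * t powr (r1 / 2) * t' powr (r2 / 2)
                        * (t powr (- \<alpha> / 2) + 1)))
       \<and> (\<forall>K>0. \<exists>C. \<forall>(x::'a) (y::'a) t t' r1 r2 r3.
            (\<forall>i\<in>Basis. \<bar>x \<bullet> i\<bar> \<le> K) \<longrightarrow> (\<forall>i\<in>Basis. \<bar>y \<bullet> i\<bar> \<le> K) \<longrightarrow>
            0 < t \<longrightarrow> t \<le> t' \<longrightarrow>
            0 \<le> r1 \<longrightarrow> r1 \<le> R \<longrightarrow> 0 \<le> r2 \<longrightarrow> r2 \<le> R \<longrightarrow> 0 \<le> r3 \<longrightarrow> r3 \<le> R \<longrightarrow>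
            (\<integral>\<^sup>+ w. \<integral>\<^sup>+ z. ennreal (heat_kernel t (x - w) * heat_kernel t' (y - z)
                 * norm w powr r1 * norm z powr r2 * exp (r3 * (norm w + norm z))
                 * (norm (w - z) powr (- \<alpha>) + 1)) \<partial>lborel \<partial>lborel)
            \<le> ennreal (C * exp (2 * r3\<^sup>2 * t') * (t powr (r1 / 2) + 1) * (t' powr (r2 / 2) + 1)
                        * (t powr (- \<alpha> / 2) + 1)))"
proof -
  have "\<alpha> < real DIM('a)"
    using assms(2) by simp
  then show ?thesis
    using heat_kernel_moment_pair_bound[OF assms(1)] heat_kernel_shifted_moment_pair_bound[OF assms(1)]
    by blast
qed

end
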